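(* Let $H_{\mathbb{C}}$ be the complex Heisenberg group of complex matrices $\begin{pmatrix}1&u_2&u_3\\0&1&u_1\\0&0&1\end{pmatrix}$. Let $\Lambda=\mathbb{Z}\langle1,e^{2\pi i/3}\rangle$ and $\Lambda'=\mathbb{Z}\langle1,i\rangle$ (Gaussian integers), and let $\Gamma_H$ (resp. $\Gamma_0$) be the subgroup of $H_{\mathbb{C}}$ of matrices with $u_1,u_2,u_3\in\Lambda$ (resp. $\in\Lambda'$). Let $N=\Gamma_H\backslash H_{\mathbb{C}}$ and let $N'=\Gamma_0\backslash H_{\mathbb{C}}$ be the Iwasawa manifold. Then $\pi_1(N)=\Gamma_H$ and $\pi_1(N')=\Gamma_0$ are not isomorphic groups; in particular $N$ and $N'$ are not diffeomorphic. *)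

theory Defs
  imports "HOL-Analysis.Analysis" "HOL-Algebra.Group" "HOL-Library.Numeral_Type"
begin

definition heis_mat :: "complex \<Rightarrow> complex \<Rightarrow> complex \<Rightarrow> complex^3^3" where
  "heis_mat u1 u2 u3 = (\<chi> i j. if i = j then 1
      else if i = 1 \<and> j = 2 then u2
      else if i = 1 \<and> j = 3 then u3
      else if i = 2 \<and> j = 3 then u1 else 0)"

definition heis_C :: "(complex^3^3) monoid" where
  "heis_C = \<lparr>carrier = {heis_mat u1 u2 u3 | u1 u2 u3. True},
            monoid.mult = (\<lambda>A B. A ** B), one = mat 1\<rparr>"

definition heis_lattice :: "complex set \<Rightarrow> (complex^3^3) monoid" where
  "heis_lattice L = \<lparr>carrier = {heis_mat u1 u2 u3 | u1 u2 u3. u1 \<in> L \<and> u2 \<in> L \<and> u3 \<in> L},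
            monoid.mult = (\<lambda>A B. A ** B), one = mat 1\<rparr>"

definition eisenstein_lattice :: "complex set" where
  "eisenstein_lattice = {of_int a + of_int b * exp (2 * of_real pi * \<i> / 3) | a b. True}"

definition gaussian_lattice :: "complex set" where
  "gaussian_lattice = {of_int a + of_int b * \<i> | a b. True}"

definition Gamma_H :: "(complex^3^3) monoid" where
  "Gamma_H = heis_lattice eisenstein_lattice"

definition Gamma_0 :: "(complex^3^3) monoid" where
  "Gamma_0 = heis_lattice gaussian_lattice"

end

theory Submission
  imports Defs
begin

text \<open>An isomorphism between two such lattices preserves commutators, and the commutator of
  heis_mat a1 a2 a3 and heis_mat b1 b2 b3 is the central element with entry a2 b1 - a1 b2.
  Multiplying the first two coordinates of an element of Gamma_H by the cube root of unity
  omega multiplies all its commutators by omega; transported to Gamma_0, this yields a Gaussian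
  integer p such that the isomorphism carries central elements u, omega u, omega^2 u to 1, p, p^2.
  Since u + omega u + omega^2 u = 0, also 1 + p + p^2 = 0, which has no solution in Z[i].\<close>

abbreviation heis_center :: "complex \<Rightarrow> complex^3^3" where
  "heis_center c \<equiv> heis_mat 0 0 c"

lemma heis_mat_mult:
  "heis_mat a1 a2 a3 ** heis_mat b1 b2 b3 = heis_mat (a1 + b1) (a2 + b2) (a3 + b3 + a2 * b1)"
  unfolding heis_mat_def
  by (simp add: matrix_matrix_mult_def vec_eq_iff sum_3 forall_3 algebra_simps)

lemma heis_mat_eq_iff:
  "heis_mat a1 a2 a3 = heis_mat b1 b2 b3 \<longleftrightarrow> a1 = b1 \<and> a2 = b2 \<and> a3 = b3"
proof
  assume "heis_mat a1 a2 a3 = heis_mat b1 b2 b3"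
  then have "heis_mat a1 a2 a3 $ i $ j = heis_mat b1 b2 b3 $ i $ j" for i j
    by simp
  from this[of 2 3] this[of 1 2] this[of 1 3] show "a1 = b1 \<and> a2 = b2 \<and> a3 = b3"
    unfolding heis_mat_def by simp
qed simp

lemma heis_mat_commutator:
  "heis_mat a1 a2 a3 ** heis_mat b1 b2 b3 =
     heis_center (a2 * b1 - a1 * b2) ** (heis_mat b1 b2 b3 ** heis_mat a1 a2 a3)"
  by (simp add: heis_mat_mult algebra_simps)

definition complex_subring :: "complex set \<Rightarrow> bool" where
  "complex_subring L \<longleftrightarrow> 1 \<in> L \<and> (\<forall>x\<in>L. \<forall>y\<in>L. x - y \<in> L \<and> x * y \<in> L)"

lemma complex_subringI:
  assumes "1 \<in> L" "\<And>x y. x \<in> L \<Longrightarrow> y \<in> L \<Longrightarrow> x - y \<in> L"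
    "\<And>x y. x \<in> L \<Longrightarrow> y \<in> L \<Longrightarrow> x * y \<in> L"
  shows "complex_subring L"
  using assms unfolding complex_subring_def by blast

context
  fixes L :: "complex set"
  assumes L: "complex_subring L"
begin

lemma complex_subring_one: "1 \<in> L"
  using L unfolding complex_subring_def by blast

lemma complex_subring_diff: "x \<in> L \<Longrightarrow> y \<in> L \<Longrightarrow> x - y \<in> L"
  using L unfolding complex_subring_def by blast

lemma complex_subring_mult: "x \<in> L \<Longrightarrow> y \<in> L \<Longrightarrow> x * y \<in> L"
  using L unfolding complex_subring_def by blast

lemma complex_subring_zero: "0 \<in> L"
  using complex_subring_diff[OF complex_subring_one complex_subring_one] by simp

lemma complex_subring_add: "x \<in> L \<Longrightarrow> y \<in> L \<Longrightarrow> x + y \<in> L"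
  using complex_subring_diff[of x "0 - y"] complex_subring_diff[OF complex_subring_zero] by simp

end

lemma heis_mat_in_heis_lattice_iff:
  "heis_mat u1 u2 u3 \<in> carrier (heis_lattice L) \<longleftrightarrow> u1 \<in> L \<and> u2 \<in> L \<and> u3 \<in> L"
  unfolding heis_lattice_def by (auto simp: heis_mat_eq_iff)

lemma heis_lattice_elim:
  assumes "X \<in> carrier (heis_lattice L)"
  obtains u1 u2 u3 where "X = heis_mat u1 u2 u3" "u1 \<in> L" "u2 \<in> L" "u3 \<in> L"
  using assms unfolding heis_lattice_def by auto

lemma mult_heis_lattice [simp]: "X \<otimes>\<^bsub>heis_lattice L\<^esub> Y = X ** Y"
  unfolding heis_lattice_def by simp

lemma heis_lattice_mult_closed:
  assumes "complex_subring L" "X \<in> carrier (heis_lattice L)" "Y \<in> carrier (heis_lattice L)"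
  shows "X ** Y \<in> carrier (heis_lattice L)"
  using assms(2,3)
  by (auto elim!: heis_lattice_elim simp: heis_mat_mult heis_mat_in_heis_lattice_iff
      complex_subring_add[OF assms(1)] complex_subring_mult[OF assms(1)])

lemma hom_heis_lattice_mult:
  assumes "h \<in> hom (heis_lattice L) (heis_lattice L')"
    "X \<in> carrier (heis_lattice L)" "Y \<in> carrier (heis_lattice L)"
  shows "h (X ** Y) = h X ** h Y"
  using hom_mult[OF assms] by simp

lemma hom_heis_lattice_commutator:
  assumes h: "h \<in> hom (heis_lattice L) (heis_lattice L')" and L: "complex_subring L"
    and a: "a1 \<in> L" "a2 \<in> L" "a3 \<in> L" and b: "b1 \<in> L" "b2 \<in> L" "b3 \<in> L"
    and ha: "h (heis_mat a1 a2 a3) = heis_mat p1 p2 p3"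
    and hb: "h (heis_mat b1 b2 b3) = heis_mat q1 q2 q3"
  shows "h (heis_center (a2 * b1 - a1 * b2)) = heis_center (p2 * q1 - p1 * q2)"
proof -
  let ?A = "heis_mat a1 a2 a3" and ?B = "heis_mat b1 b2 b3"
    and ?C = "heis_center (a2 * b1 - a1 * b2)"
  have A: "?A \<in> carrier (heis_lattice L)" and B: "?B \<in> carrier (heis_lattice L)"
    using a b by (simp_all add: heis_mat_in_heis_lattice_iff)
  have C: "?C \<in> carrier (heis_lattice L)"
    using a b L by (simp add: heis_mat_in_heis_lattice_iff complex_subring_zero
        complex_subring_diff complex_subring_mult)
  then have "h ?C \<in> carrier (heis_lattice L')"
    by (rule hom_in_carrier[OF h])
  then obtain r1 r2 r3 where hc: "h ?C = heis_mat r1 r2 r3"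
    by (auto elim: heis_lattice_elim)
  have "h ?A ** h ?B = h ?C ** (h ?B ** h ?A)"
    using hom_heis_lattice_mult[OF h] heis_lattice_mult_closed[OF L] A B C
    by (metis heis_mat_commutator)
  then have "heis_mat (p1 + q1) (p2 + q2) (p3 + q3 + p2 * q1) =
      heis_mat (r1 + (q1 + p1)) (r2 + (q2 + p2)) (r3 + (q3 + p3 + q2 * p1) + r2 * (q1 + p1))"
    by (simp add: ha hb hc heis_mat_mult)
  then show ?thesis
    by (auto simp: hc heis_mat_eq_iff algebra_simps)
qed

lemma hom_heis_lattice_one:
  assumes h: "h \<in> hom (heis_lattice L) (heis_lattice L')" and L: "complex_subring L"
  shows "h (heis_center 0) = heis_center 0"
proof -
  have I: "heis_center 0 \<in> carrier (heis_lattice L)"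
    using L by (simp add: heis_mat_in_heis_lattice_iff complex_subring_zero)
  then have "h (heis_center 0) \<in> carrier (heis_lattice L')"
    by (rule hom_in_carrier[OF h])
  then obtain c1 c2 c3 where hI: "h (heis_center 0) = heis_mat c1 c2 c3"
    by (auto elim: heis_lattice_elim)
  have "h (heis_center 0) = h (heis_center 0) ** h (heis_center 0)"
    using hom_heis_lattice_mult[OF h I I] by (simp add: heis_mat_mult)
  then show ?thesis
    by (auto simp: hI heis_mat_mult heis_mat_eq_iff)
qed

lemma iso_heis_lattice_center_intertwines:
  assumes \<phi>: "\<phi> \<in> iso (heis_lattice L) (heis_lattice L')"
    and L: "complex_subring L" and L': "complex_subring L'" and \<omega>: "\<omega> \<in> L"
  obtains p where "p \<in> L'"
    "\<And>x. x \<in> L' \<Longrightarrow> \<exists>u\<in>L. \<phi> (heis_center u) = heis_center x \<and>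
       \<phi> (heis_center (\<omega> * u)) = heis_center (p * x)"
proof -
  have hom: "\<phi> \<in> hom (heis_lattice L) (heis_lattice L')"
    and onto: "\<phi> ` carrier (heis_lattice L) = carrier (heis_lattice L')"
    using \<phi> by (simp_all add: iso_iff)
  have preimage: "\<exists>v1 v2 v3. v1 \<in> L \<and> v2 \<in> L \<and> v3 \<in> L \<and> \<phi> (heis_mat v1 v2 v3) = heis_mat u1 u2 u3"
    if "u1 \<in> L'" "u2 \<in> L'" "u3 \<in> L'" for u1 u2 u3
  proof -
    have "heis_mat u1 u2 u3 \<in> \<phi> ` carrier (heis_lattice L)"
      using that onto by (simp add: heis_mat_in_heis_lattice_iff)
    then show ?thesis
      by (force elim!: heis_lattice_elim)
  qed
  obtain a1 a2 a3 where a: "a1 \<in> L" "a2 \<in> L" "a3 \<in> L"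
    and \<phi>a: "\<phi> (heis_mat a1 a2 a3) = heis_mat 0 1 0"
    using preimage[of 0 1 0] L' by (auto simp: complex_subring_zero complex_subring_one)
  have \<omega>a: "heis_mat (\<omega> * a1) (\<omega> * a2) 0 \<in> carrier (heis_lattice L)"
    using a \<omega> L by (simp add: heis_mat_in_heis_lattice_iff complex_subring_mult complex_subring_zero)
  then have "\<phi> (heis_mat (\<omega> * a1) (\<omega> * a2) 0) \<in> carrier (heis_lattice L')"
    by (rule hom_in_carrier[OF hom])
  then obtain p1 p p3 where "p \<in> L'"
    and \<phi>\<omega>a: "\<phi> (heis_mat (\<omega> * a1) (\<omega> * a2) 0) = heis_mat p1 p p3"
    by (auto elim: heis_lattice_elim)
  show thesis
  proof (rule that[OF \<open>p \<in> L'\<close>])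
    fix x assume "x \<in> L'"
    then obtain b1 b2 b3 where b: "b1 \<in> L" "b2 \<in> L" "b3 \<in> L"
      and \<phi>b: "\<phi> (heis_mat b1 b2 b3) = heis_mat x 0 0"
      using preimage[of x 0 0] L' by (auto simp: complex_subring_zero)
    have "\<phi> (heis_center (a2 * b1 - a1 * b2)) = heis_center x"
      using hom_heis_lattice_commutator[OF hom L a b \<phi>a \<phi>b] by simp
    moreover have "\<phi> (heis_center (\<omega> * (a2 * b1 - a1 * b2))) = heis_center (p * x)"
      using hom_heis_lattice_commutator[OF hom L _ _ _ b \<phi>\<omega>a \<phi>b] \<omega>a
      by (simp add: heis_mat_in_heis_lattice_iff algebra_simps)
    moreover have "a2 * b1 - a1 * b2 \<in> L"
      using a b L by (simp add: complex_subring_diff complex_subring_mult)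
    ultimately show "\<exists>u\<in>L. \<phi> (heis_center u) = heis_center x \<and>
        \<phi> (heis_center (\<omega> * u)) = heis_center (p * x)"
      by blast
  qed
qed

theorem heis_lattice_not_iso:
  assumes L: "complex_subring L" and L': "complex_subring L'"
    and \<omega>: "\<omega> \<in> L" "\<omega>\<^sup>2 + \<omega> + 1 = 0"
    and no_root: "\<And>p. p \<in> L' \<Longrightarrow> p\<^sup>2 + p + 1 \<noteq> 0"
  shows "\<not> heis_lattice L \<cong> heis_lattice L'"
proof
  assume "heis_lattice L \<cong> heis_lattice L'"
  then obtain \<phi> where \<phi>: "\<phi> \<in> iso (heis_lattice L) (heis_lattice L')"
    unfolding is_iso_def by blast
  then have hom: "\<phi> \<in> hom (heis_lattice L) (heis_lattice L')"
    and inj: "inj_on \<phi> (carrier (heis_lattice L))"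
    by (simp_all add: iso_iff)
  have center: "heis_center c \<in> carrier (heis_lattice L)" if "c \<in> L" for c
    using that L by (simp add: heis_mat_in_heis_lattice_iff complex_subring_zero)
  obtain p where "p \<in> L'" and intertwines: "\<And>x. x \<in> L' \<Longrightarrow> \<exists>u\<in>L.
      \<phi> (heis_center u) = heis_center x \<and> \<phi> (heis_center (\<omega> * u)) = heis_center (p * x)"
    using iso_heis_lattice_center_intertwines[OF \<phi> L L' \<omega>(1)] by blast
  obtain u where u: "u \<in> L" and \<phi>u: "\<phi> (heis_center u) = heis_center 1"
    and \<phi>\<omega>u: "\<phi> (heis_center (\<omega> * u)) = heis_center p"
    using intertwines[OF complex_subring_one[OF L']] by auto
  obtain v where v: "v \<in> L" and \<phi>v: "\<phi> (heis_center v) = heis_center p"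
    and \<phi>\<omega>v: "\<phi> (heis_center (\<omega> * v)) = heis_center (p * p)"
    using intertwines[OF \<open>p \<in> L'\<close>] by auto
  have \<omega>u: "\<omega> * u \<in> L" and \<omega>v: "\<omega> * v \<in> L"
    using u v \<omega>(1) L by (simp_all add: complex_subring_mult)
  have "v = \<omega> * u"
    using inj_onD[OF inj _ center[OF v] center[OF \<omega>u]] \<phi>v \<phi>\<omega>u by (simp add: heis_mat_eq_iff)
  then have "u + \<omega> * u + \<omega> * v = (\<omega>\<^sup>2 + \<omega> + 1) * u"
    by (simp add: power2_eq_square algebra_simps)
  then have "heis_center u ** heis_center (\<omega> * u) ** heis_center (\<omega> * v) = heis_center 0"
    using \<omega>(2) by (simp add: heis_mat_mult)
  then have "heis_center 0 = \<phi> (heis_center u ** heis_center (\<omega> * u) ** heis_center (\<omega> * v))"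
    using hom_heis_lattice_one[OF hom L] by simp
  also have "\<dots> = \<phi> (heis_center u) ** \<phi> (heis_center (\<omega> * u)) ** \<phi> (heis_center (\<omega> * v))"
    using hom_heis_lattice_mult[OF hom] heis_lattice_mult_closed[OF L] center u \<omega>u \<omega>v
    by metis
  also have "\<dots> = heis_center (1 + p + p * p)"
    by (simp add: \<phi>u \<phi>\<omega>u \<phi>\<omega>v heis_mat_mult)
  finally show False
    using no_root[OF \<open>p \<in> L'\<close>] by (simp add: heis_mat_eq_iff power2_eq_square algebra_simps)
qed


definition eisenstein_omega :: complex where
  "eisenstein_omega = exp (2 * of_real pi * \<i> / 3)"

lemma eisenstein_omega_cube_root: "eisenstein_omega\<^sup>2 + eisenstein_omega + 1 = 0"
proof -
  have "eisenstein_omega ^ 3 = exp (of_nat 3 * (2 * of_real pi * \<i> / 3))"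
    unfolding eisenstein_omega_def by (rule exp_of_nat_mult[symmetric])
  also have "of_nat 3 * (2 * of_real pi * \<i> / 3) = 2 * of_real pi * \<i>"
    by simp
  finally have cube: "eisenstein_omega ^ 3 = 1"
    by simp
  have "eisenstein_omega \<noteq> 1"
  proof
    assume "eisenstein_omega = 1"
    then obtain n :: int where "2 * pi / 3 = 2 * pi * n"
      unfolding eisenstein_omega_def exp_eq_1 by (auto elim!: Ints_cases)
    then have "1 = 3 * real_of_int n"
      by (simp add: field_simps)
    then have "(1::int) = 3 * n"
      by linarith
    then show False
      by presburger
  qed
  moreover have "(eisenstein_omega - 1) * (eisenstein_omega\<^sup>2 + eisenstein_omega + 1) = 0"
    using cube by (simp add: algebra_simps power2_eq_square power3_eq_cube)
  ultimately show ?thesis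
    by simp
qed

lemma eisenstein_lattice_iff:
  "z \<in> eisenstein_lattice \<longleftrightarrow> (\<exists>a b. z = of_int a + of_int b * eisenstein_omega)"
  unfolding eisenstein_lattice_def eisenstein_omega_def by auto

lemma eisenstein_omega_in_lattice: "eisenstein_omega \<in> eisenstein_lattice"
  unfolding eisenstein_lattice_iff by (rule exI[of _ 0], rule exI[of _ 1]) simp

lemma complex_subring_eisenstein_lattice: "complex_subring eisenstein_lattice"
proof (rule complex_subringI)
  show "1 \<in> eisenstein_lattice"
    unfolding eisenstein_lattice_iff by (rule exI[of _ 1], rule exI[of _ 0]) simp
next
  fix x y assume "x \<in> eisenstein_lattice" "y \<in> eisenstein_lattice"
  then obtain a b c d where x: "x = of_int a + of_int b * eisenstein_omega"
    and y: "y = of_int c + of_int d * eisenstein_omega"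
    unfolding eisenstein_lattice_iff by blast
  show "x - y \<in> eisenstein_lattice"
    unfolding eisenstein_lattice_iff x y
    by (rule exI[of _ "a - c"], rule exI[of _ "b - d"]) (simp add: algebra_simps)
  have "eisenstein_omega\<^sup>2 = - 1 - eisenstein_omega"
    using eisenstein_omega_cube_root by (simp add: eq_diff_eq eq_neg_iff_add_eq_0)
  have "x * y = of_int a * of_int c + (of_int a * of_int d + of_int b * of_int c) * eisenstein_omega
      + of_int b * of_int d * eisenstein_omega\<^sup>2"
    by (simp add: x y power2_eq_square algebra_simps)
  also have "\<dots> = of_int (a * c - b * d) + of_int (a * d + b * c - b * d) * eisenstein_omega"
    unfolding \<open>eisenstein_omega\<^sup>2 = - 1 - eisenstein_omega\<close> by (simp add: algebra_simps)
  finally show "x * y \<in> eisenstein_lattice"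
    unfolding eisenstein_lattice_iff by blast
qed

lemma gaussian_lattice_iff: "z \<in> gaussian_lattice \<longleftrightarrow> (\<exists>a b. z = of_int a + of_int b * \<i>)"
  unfolding gaussian_lattice_def by auto

lemma complex_subring_gaussian_lattice: "complex_subring gaussian_lattice"
proof (rule complex_subringI)
  show "1 \<in> gaussian_lattice"
    unfolding gaussian_lattice_iff by (rule exI[of _ 1], rule exI[of _ 0]) simp
next
  fix x y assume "x \<in> gaussian_lattice" "y \<in> gaussian_lattice"
  then obtain a b c d where x: "x = of_int a + of_int b * \<i>" and y: "y = of_int c + of_int d * \<i>"
    unfolding gaussian_lattice_iff by blast
  show "x - y \<in> gaussian_lattice"
    unfolding gaussian_lattice_iff x y
    by (rule exI[of _ "a - c"], rule exI[of _ "b - d"]) (simp add: algebra_simps)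
  show "x * y \<in> gaussian_lattice"
    unfolding gaussian_lattice_iff x y
    by (rule exI[of _ "a * c - b * d"], rule exI[of _ "a * d + b * c"])
      (simp add: algebra_simps power2_eq_square)
qed

lemma gaussian_lattice_no_cube_root:
  assumes "p \<in> gaussian_lattice"
  shows "p\<^sup>2 + p + 1 \<noteq> 0"
proof
  assume root: "p\<^sup>2 + p + 1 = 0"
  obtain a b :: int where p: "p = of_int a + of_int b * \<i>"
    using assms unfolding gaussian_lattice_iff by blast
  have "Re (p\<^sup>2 + p + 1) = 0" "Im (p\<^sup>2 + p + 1) = 0"
    using root by simp_all
  then have re: "a * a - b * b + a + 1 = 0" and im: "b * (2 * a + 1) = 0"
    unfolding p by (simp_all add: power2_eq_square algebra_simps flip: of_int_mult of_int_diff)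
  have "2 * a + 1 \<noteq> 0"
    by presburger
  with im have "b = 0"
    by simp
  with re have "(2 * a + 1)\<^sup>2 + 3 = 0"
    by (simp add: power2_eq_square algebra_simps)
  then show False
    by (smt (verit) zero_le_power2)
qed

theorem proposition3p3:
  shows "\<not> (Gamma_H \<cong> Gamma_0)"
  unfolding Gamma_H_def Gamma_0_def
  using heis_lattice_not_iso[OF complex_subring_eisenstein_lattice complex_subring_gaussian_lattice
      eisenstein_omega_in_lattice eisenstein_omega_cube_root gaussian_lattice_no_cube_root] .

end
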